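(* Let $T(x)$ be an $N\times N$ matrix polynomial such that $T(x)^{-1}$ is also a matrix polynomial, and let $W,\widetilde W$ be weight matrices with $W(x)=T(x)\widetilde W(x)T(x)^*$. Then $\mathcal F_R(W)=T(x)\,\mathcal F_R(\widetilde W)\,T(x)^{-1}$. Moreover, an operator $\mathcal A\in\mathcal F_R(W)$ is $W$-symmetric if and only if $T(x)^{-1}\mathcal A\,T(x)\in\mathcal F_R(\widetilde W)$ is $\widetilde W$-symmetric.
   Context: Weight matrices are smooth, a.e. positive definite matrix functions on an interval with finite moments; standing assumption: each derivative $W^{(n)}$ decays exponentially at infinity and $W^{(n)}p_n$ has finite moments for some scalar polynomial $p_n$. $\langle P,Q\rangle_W=\int P(x)W(x)Q(x)^*dx$. Differential operators act on the right: $P\cdot\sum_j\partial^jF_j=\sum_j\partial^j(P)F_j$. An operator $\mathfrak D$ with polynomial coefficients is $W$-adjointable if there is an operator $\widetilde{\mathfrak D}$ with polynomial coefficients with $\langle P\cdot\mathfrak D,Q\rangle_W=\langle P,Q\cdot\widetilde{\mathfrak D}\rangle_W$ for all matrix polynomials $P,Q$; $\mathcal F_R(W)$ (right Fourier algebra) is the set of $W$-adjointable operators with polynomial coefficients (whose $W$-adjoint has polynomial coefficients). $\mathfrak D$ is $W$-symmetric if $\langle P\cdot\mathfrak D,Q\rangle_W=\langle P,Q\cdot\mathfrak D\rangle_W$ for all $P,Q$. Conjugation $T\mathcal BT^{-1}$ denotes the composition of the operators of multiplication by $T$, $\mathcal B$, and multiplication by $T^{-1}$. *)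

theory Defs
  imports "HOL-Analysis.Analysis" "HOL-Computational_Algebra.Polynomial"
begin

text \<open>N x N matrix polynomials: matrices (indexed by the finite type 'n, N = CARD('n))
 whose entries are complex polynomials in the real variable x.\<close>
type_synonym 'n mpoly = "complex poly ^('n::finite)^'n"

definition cadj :: "complex^('n::finite)^'n \<Rightarrow> complex^'n^'n" where
  "cadj M = (\<chi> i j. cnj (M $ j $ i))"

definition mpeval :: "('n::finite) mpoly \<Rightarrow> real \<Rightarrow> complex^'n^'n" where
  "mpeval P x = (\<chi> i j. poly (P $ i $ j) (complex_of_real x))"

definition mpderiv :: "('n::finite) mpoly \<Rightarrow> 'n mpoly" where
  "mpderiv P = (\<chi> i j. pderiv (P $ i $ j))"

definition cscale :: "complex \<Rightarrow> complex^('n::finite)^'n \<Rightarrow> complex^'n^'n" where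
  "cscale c M = (\<chi> i j. c * M $ i $ j)"

definition pos_def_cmat :: "complex^('n::finite)^'n \<Rightarrow> bool" where
  "pos_def_cmat M \<longleftrightarrow> cadj M = M \<and>
     (\<forall>v::complex^'n. v \<noteq> 0 \<longrightarrow> 0 < Re (\<Sum>i\<in>UNIV. \<Sum>j\<in>UNIV. cnj (v $ i) * M $ i $ j * v $ j))"

definition finite_moments :: "real set \<Rightarrow> (real \<Rightarrow> complex^('n::finite)^'n) \<Rightarrow> bool" where
  "finite_moments I F \<longleftrightarrow> (\<forall>k::nat. set_integrable lborel I (\<lambda>x. (x ^ k) *\<^sub>R F x))"

definition weight_matrix :: "real set \<Rightarrow> (real \<Rightarrow> complex^('n::finite)^'n) \<Rightarrow> bool" where
  "weight_matrix I W \<longleftrightarrow>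
     is_interval I \<and> open I \<and> I \<noteq> {} \<and>
     (\<exists>Wd :: nat \<Rightarrow> real \<Rightarrow> complex^'n^'n.
        Wd 0 = W \<and>
        (\<forall>k. \<forall>x\<in>I. (Wd k has_vector_derivative Wd (Suc k) x) (at x)) \<and>
        (AE x in lborel. x \<in> I \<longrightarrow> pos_def_cmat (W x)) \<and>
        finite_moments I W \<and>
        (\<forall>n. \<exists>c>0. \<exists>C R. \<forall>x\<in>I. \<bar>x\<bar> \<ge> R \<longrightarrow> norm (Wd n x) \<le> C * exp (- c * \<bar>x\<bar>)) \<and>
        (\<forall>n. \<exists>p::complex poly. p \<noteq> 0 \<and>
              finite_moments I (\<lambda>x. cscale (poly p (complex_of_real x)) (Wd n x))))"

definition wip :: "real set \<Rightarrow> (real \<Rightarrow> complex^('n::finite)^'n) \<Rightarrow> 'n mpoly \<Rightarrow> 'n mpoly \<Rightarrow> complex^'n^'n" where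
  "wip I W P Q = (LINT x:I|lborel. mpeval P x ** W x ** cadj (mpeval Q x))"

text \<open>A differential operator is identified with its (right) action on matrix polynomials,
 P \<cdot> (\<Sum>j \<partial>^j F_j) = \<Sum>j \<partial>^j(P) F_j; this action determines the coefficients F_j.\<close>
type_synonym ('n) mop = "'n mpoly \<Rightarrow> 'n mpoly"

definition poly_diff_op :: "('n::finite) mop \<Rightarrow> bool" where
  "poly_diff_op D \<longleftrightarrow>
     (\<exists>(m::nat) (F::nat \<Rightarrow> 'n mpoly). \<forall>P. D P = (\<Sum>j\<le>m. (mpderiv ^^ j) P ** F j))"

definition W_adjointable :: "real set \<Rightarrow> (real \<Rightarrow> complex^('n::finite)^'n) \<Rightarrow> 'n mop \<Rightarrow> bool" where
  "W_adjointable I W D \<longleftrightarrow>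
     (\<exists>D'. poly_diff_op D' \<and> (\<forall>P Q. wip I W (D P) Q = wip I W P (D' Q)))"

definition right_fourier :: "real set \<Rightarrow> (real \<Rightarrow> complex^('n::finite)^'n) \<Rightarrow> 'n mop set" where
  "right_fourier I W = {D. poly_diff_op D \<and> W_adjointable I W D}"

definition W_symmetric :: "real set \<Rightarrow> (real \<Rightarrow> complex^('n::finite)^'n) \<Rightarrow> 'n mop \<Rightarrow> bool" where
  "W_symmetric I W D \<longleftrightarrow> (\<forall>P Q. wip I W (D P) Q = wip I W P (D Q))"

text \<open>Conjugation S B S': composition of multiplication by S, then B, then multiplication by S'
 (operators act on the right).\<close>
definition conj_op :: "('n::finite) mpoly \<Rightarrow> 'n mop \<Rightarrow> 'n mpoly \<Rightarrow> 'n mop" where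
  "conj_op S B S' = (\<lambda>P. B (P ** S) ** S')"

end

theory Submission
  imports Defs
begin

text \<open>Since \<open>W = T Wt T\<^sup>*\<close>, the pairing satisfies \<open>\<langle>P, Q\<rangle>\<^sub>W = \<langle>P T, Q T\<rangle>\<^sub>W\<^sub>t\<close>, and symmetrically
  \<open>\<langle>P, Q\<rangle>\<^sub>W\<^sub>t = \<langle>P T\<^sup>-\<^sup>1, Q T\<^sup>-\<^sup>1\<rangle>\<^sub>W\<close>. Conjugating an operator by \<open>T\<close> therefore transports
  \<open>Wt\<close>-adjoints to \<open>W\<close>-adjoints and \<open>Wt\<close>-symmetry to \<open>W\<close>-symmetry, and conjugation by \<open>T\<^sup>-\<^sup>1\<close>
  goes back. Because \<open>T\<close> and \<open>T\<^sup>-\<^sup>1\<close> are polynomial, the Leibniz rule shows that conjugation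
  keeps the coefficients polynomial.\<close>

lemma matrix_add_rdistrib:
  fixes A B :: "'a::semiring_1^'m::finite^'n::finite" and C :: "'a^'p::finite^'m"
  shows "(A + B) ** C = A ** C + B ** C"
  by (vector matrix_matrix_mult_def sum.distrib[symmetric] field_simps)

lemma matrix_sum_mul:
  fixes f :: "'i \<Rightarrow> 'a::semiring_1^'m::finite^'n::finite" and S :: "'a^'p::finite^'m"
  assumes "finite A"
  shows "sum f A ** S = (\<Sum>j\<in>A. f j ** S)"
  using assms by (induction A rule: finite_induct) (auto simp: matrix_add_rdistrib)

lemma matrix_inv_right:
  assumes "invertible (T :: 'a::semiring_1^'n::finite^'n)"
  shows "T ** matrix_inv T = mat 1"
  using someI_ex[OF assms[unfolded invertible_def]] unfolding matrix_inv_def by blast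

lemma matrix_inv_left:
  assumes "invertible (T :: 'a::semiring_1^'n::finite^'n)"
  shows "matrix_inv T ** T = mat 1"
  using someI_ex[OF assms[unfolded invertible_def]] unfolding matrix_inv_def by blast

lemma mpderiv_add: "mpderiv (A + B) = mpderiv A + mpderiv B"
  by (simp add: mpderiv_def vec_eq_iff pderiv_add)

lemma mpderiv_sum:
  fixes f :: "'i \<Rightarrow> ('n::finite) mpoly"
  assumes "finite A"
  shows "mpderiv (sum f A) = (\<Sum>j\<in>A. mpderiv (f j))"
  using assms by (induction A rule: finite_induct) (auto simp: mpderiv_add mpderiv_def vec_eq_iff pderiv_add)

lemma mpderiv_mult:
  fixes A B :: "('n::finite) mpoly"
  shows "mpderiv (A ** B) = mpderiv A ** B + A ** mpderiv B"
  by (simp add: mpderiv_def vec_eq_iff matrix_matrix_mult_def pderiv_mult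
      higher_pderiv_sum[of 1, simplified]
      sum.distrib[symmetric] algebra_simps)

lemma poly_diff_op_monom:
  fixes G :: "('n::finite) mpoly"
  shows "poly_diff_op (\<lambda>P. (mpderiv ^^ k) P ** G)"
  unfolding poly_diff_op_def
proof (intro exI allI)
  fix P :: "('n::finite) mpoly"
  show "(mpderiv ^^ k) P ** G = (\<Sum>j\<le>k. (mpderiv ^^ j) P ** (if j = k then G else 0))"
    by (simp add: if_distrib cong: if_cong)
qed

lemma sum_atMost_extend:
  fixes f :: "nat \<Rightarrow> 'a::comm_monoid_add"
  assumes "m \<le> n"
  shows "(\<Sum>j\<le>m. f j) = (\<Sum>j\<le>n. if j \<le> m then f j else 0)"
proof -
  have "{..n} \<inter> {j. j \<le> m} = {..m}"
    using assms by auto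
  then show ?thesis
    by (simp add: sum.If_cases)
qed

lemma poly_diff_op_add:
  assumes "poly_diff_op D1" "poly_diff_op D2"
  shows "poly_diff_op (\<lambda>P. D1 P + D2 P)"
proof -
  obtain m1 F1 where D1: "\<And>P. D1 P = (\<Sum>j\<le>m1. (mpderiv ^^ j) P ** F1 j)"
    using assms(1) unfolding poly_diff_op_def by blast
  obtain m2 F2 where D2: "\<And>P. D2 P = (\<Sum>j\<le>m2. (mpderiv ^^ j) P ** F2 j)"
    using assms(2) unfolding poly_diff_op_def by blast
  define m where "m = max m1 m2"
  define F where "F j = (if j \<le> m1 then F1 j else 0) + (if j \<le> m2 then F2 j else 0)" for j
  have "D1 P + D2 P = (\<Sum>j\<le>m. (mpderiv ^^ j) P ** F j)" for P
    unfolding D1 D2 F_def matrix_add_ldistrib sum.distrib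
    by (simp add: sum_atMost_extend[of m1 m] sum_atMost_extend[of m2 m] m_def if_distrib
        cong: if_cong)
  then show ?thesis
    unfolding poly_diff_op_def by blast
qed

lemma poly_diff_op_sum:
  fixes D :: "'i \<Rightarrow> ('n::finite) mop"
  assumes "finite A" "\<And>j. j \<in> A \<Longrightarrow> poly_diff_op (D j)"
  shows "poly_diff_op (\<lambda>P. \<Sum>j\<in>A. D j P)"
  using assms
proof (induction A rule: finite_induct)
  case empty
  then show ?case using poly_diff_op_monom[of 0 0] by simp
next
  case (insert x F)
  then show ?case using poly_diff_op_add[of "D x" "\<lambda>P. \<Sum>j\<in>F. D j P"] by simp
qed

lemma poly_diff_op_mult_right:
  assumes "poly_diff_op D"
  shows "poly_diff_op (\<lambda>P. D P ** S)"
proof -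
  obtain m F where D: "\<And>P. D P = (\<Sum>j\<le>m. (mpderiv ^^ j) P ** F j)"
    using assms unfolding poly_diff_op_def by blast
  have "D P ** S = (\<Sum>j\<le>m. (mpderiv ^^ j) P ** (F j ** S))" for P
    by (simp add: D matrix_sum_mul matrix_mul_assoc)
  then show ?thesis
    unfolding poly_diff_op_def by (intro exI[of _ m] exI[of _ "\<lambda>j. F j ** S"]) blast
qed

lemma poly_diff_op_mpderiv:
  assumes "poly_diff_op D"
  shows "poly_diff_op (\<lambda>P. mpderiv (D P))"
proof -
  obtain m F where D: "\<And>P. D P = (\<Sum>j\<le>m. (mpderiv ^^ j) P ** F j)"
    using assms unfolding poly_diff_op_def by blast
  have "mpderiv (D P) =
      (\<Sum>j\<le>m. (mpderiv ^^ Suc j) P ** F j + (mpderiv ^^ j) P ** mpderiv (F j))" for P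
    by (simp add: D mpderiv_sum mpderiv_mult sum.distrib)
  moreover have "poly_diff_op (\<lambda>P. \<Sum>j\<le>m.
      (mpderiv ^^ Suc j) P ** F j + (mpderiv ^^ j) P ** mpderiv (F j))"
    by (intro poly_diff_op_sum poly_diff_op_add poly_diff_op_monom) auto
  ultimately show ?thesis by simp
qed

lemma poly_diff_op_mpderiv_pow_mult: "poly_diff_op (\<lambda>P. (mpderiv ^^ k) (P ** S))"
proof (induction k)
  case 0
  then show ?case using poly_diff_op_monom[of 0 S] by simp
next
  case (Suc k)
  then show ?case using poly_diff_op_mpderiv[OF Suc] by simp
qed

lemma poly_diff_op_conj_op:
  assumes "poly_diff_op D"
  shows "poly_diff_op (conj_op S D S')"
proof -
  obtain m F where D: "\<And>P. D P = (\<Sum>j\<le>m. (mpderiv ^^ j) P ** F j)"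
    using assms unfolding poly_diff_op_def by blast
  have "poly_diff_op (\<lambda>P. \<Sum>j\<le>m. (mpderiv ^^ j) (P ** S) ** F j)"
    by (intro poly_diff_op_sum poly_diff_op_mult_right poly_diff_op_mpderiv_pow_mult) auto
  then show ?thesis
    unfolding conj_op_def D by (rule poly_diff_op_mult_right)
qed

lemma conj_op_conj_op: "conj_op S (conj_op S' D R') R = conj_op (S ** S') D (R' ** R)"
  by (simp add: conj_op_def matrix_mul_assoc)

lemma conj_op_mat_1: "conj_op (mat 1) D (mat 1) = D"
  by (simp add: conj_op_def)

lemma mpeval_mult: "mpeval (A ** B) x = mpeval A x ** mpeval B x"
  by (simp add: mpeval_def matrix_matrix_mult_def poly_sum vec_eq_iff)

lemma cadj_mult: "cadj (A ** B) = cadj B ** cadj A"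
  by (simp add: cadj_def matrix_matrix_mult_def vec_eq_iff mult.commute)

lemma wip_factor:
  assumes "\<forall>x\<in>I. W x = mpeval T x ** Wt x ** cadj (mpeval T x)"
  shows "wip I W P Q = wip I Wt (P ** T) (Q ** T)"
proof -
  have "indicator I x *\<^sub>R (mpeval P x ** W x ** cadj (mpeval Q x))
      = indicator I x *\<^sub>R (mpeval (P ** T) x ** Wt x ** cadj (mpeval (Q ** T) x))" for x
    using assms by (cases "x \<in> I") (auto simp: mpeval_mult cadj_mult matrix_mul_assoc)
  then show ?thesis
    unfolding wip_def set_lebesgue_integral_def by presburger
qed

lemma wip_conj_op_left:
  assumes transfer: "\<And>P Q. wip I W P Q = wip I Wt (P ** S) (Q ** S)"
    and inverse: "S' ** S = mat 1"
  shows "wip I W (conj_op S B S' P) Q = wip I Wt (B (P ** S)) (Q ** S)"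
  by (simp add: transfer conj_op_def matrix_mul_assoc[symmetric] inverse)

lemma wip_conj_op_right:
  assumes transfer: "\<And>P Q. wip I W P Q = wip I Wt (P ** S) (Q ** S)"
    and inverse: "S' ** S = mat 1"
  shows "wip I W P (conj_op S B S' Q) = wip I Wt (P ** S) (B (Q ** S))"
  by (simp add: transfer conj_op_def matrix_mul_assoc[symmetric] inverse)

lemma right_fourier_conj_op:
  assumes transfer: "\<And>P Q. wip I W P Q = wip I Wt (P ** S) (Q ** S)"
    and inverse: "S' ** S = mat 1"
    and B: "B \<in> right_fourier I Wt"
  shows "conj_op S B S' \<in> right_fourier I W"
proof -
  obtain B' where "poly_diff_op B'" and adj: "\<And>P Q. wip I Wt (B P) Q = wip I Wt P (B' Q)"
    using B unfolding right_fourier_def W_adjointable_def by blast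
  moreover have "wip I W (conj_op S B S' P) Q = wip I W P (conj_op S B' S' Q)" for P Q
    by (simp add: wip_conj_op_left[OF transfer inverse] wip_conj_op_right[OF transfer inverse] adj)
  ultimately show ?thesis
    using B unfolding right_fourier_def W_adjointable_def by (blast intro: poly_diff_op_conj_op)
qed

lemma W_symmetric_conj_op:
  assumes transfer: "\<And>P Q. wip I W P Q = wip I Wt (P ** S) (Q ** S)"
    and inverse: "S' ** S = mat 1"
    and "W_symmetric I Wt B"
  shows "W_symmetric I W (conj_op S B S')"
  using assms(3)
  by (simp add: W_symmetric_def wip_conj_op_left[OF transfer inverse]
      wip_conj_op_right[OF transfer inverse])

theorem proposition3p4:
  fixes T :: "('n::finite) mpoly"
    and I :: "real set"
    and W Wt :: "real \<Rightarrow> complex^'n^'n"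
  assumes "invertible T"
    and "weight_matrix I W"
    and "weight_matrix I Wt"
    and "\<forall>x\<in>I. W x = mpeval T x ** Wt x ** cadj (mpeval T x)"
  shows "right_fourier I W = (\<lambda>B. conj_op T B (matrix_inv T)) ` right_fourier I Wt \<and>
         (\<forall>A\<in>right_fourier I W.
           W_symmetric I W A \<longleftrightarrow>
           (conj_op (matrix_inv T) A T \<in> right_fourier I Wt \<and>
            W_symmetric I Wt (conj_op (matrix_inv T) A T)))"
proof -
  define Ti where "Ti = matrix_inv T"
  have TTi: "T ** Ti = mat 1" and TiT: "Ti ** T = mat 1"
    unfolding Ti_def using matrix_inv_right[OF assms(1)] matrix_inv_left[OF assms(1)] .
  have transfer: "wip I W P Q = wip I Wt (P ** T) (Q ** T)" for P Q
    using wip_factor[OF assms(4)] .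
  have transfer_inv: "wip I Wt P Q = wip I W (P ** Ti) (Q ** Ti)" for P Q
    using transfer[of "P ** Ti" "Q ** Ti"] by (simp add: matrix_mul_assoc[symmetric] TiT)
  have conj_back: "conj_op T (conj_op Ti A T) Ti = A" for A
    by (simp add: conj_op_conj_op TTi conj_op_mat_1)
  have to_Wt: "conj_op Ti A T \<in> right_fourier I Wt" if "A \<in> right_fourier I W" for A
    using right_fourier_conj_op[OF transfer_inv TTi that] .
  have "right_fourier I W = (\<lambda>B. conj_op T B Ti) ` right_fourier I Wt"
  proof (intro subset_antisym subsetI)
    fix A
    assume "A \<in> right_fourier I W"
    then show "A \<in> (\<lambda>B. conj_op T B Ti) ` right_fourier I Wt"
      using to_Wt conj_back by (metis image_eqI)
  qed (use right_fourier_conj_op[OF transfer TiT] in blast)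
  moreover have "W_symmetric I W A \<longleftrightarrow> W_symmetric I Wt (conj_op Ti A T)" for A
    using W_symmetric_conj_op[OF transfer_inv TTi, of A]
      W_symmetric_conj_op[OF transfer TiT, of "conj_op Ti A T"] conj_back by auto
  ultimately show ?thesis
    using to_Wt unfolding Ti_def by blast
qed

end
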